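(* Let ${\tt G}$ be a connected digraph with exactly $n$ edges. If the path poset $P({\tt G})$ has a maximum, then $P({\tt G})\cong\mathbb B(n)$ as posets and ${\tt G}\cong{\tt I}_n$. In particular, a connected digraph has a Boolean path poset if and only if it is isomorphic to ${\tt I}_n$ for some $n$.
   Context: A digraph ${\tt G}=(V,E)$ has finite $V$ and $E\subseteq (V\times V)\setminus\{(v,v)\}$; connected means the underlying undirected graph is connected; isomorphism is an isomorphism in the category of digraphs with injective edge-preserving vertex maps. A multipath of ${\tt G}$ is a spanning subgraph (all vertices, subset of edges) each of whose components is an isolated vertex or a simple directed path (edges $e_1,\dots,e_k$ with target of $e_i$ equal to source of $e_{i+1}$, no repeated vertex, not a cycle); the path poset $P({\tt G})$ is the set of multipaths ordered by inclusion of edge sets. $\mathbb B(n)$ is the power set of $\{0,\dots,n-1\}$ ordered by inclusion; a Boolean poset is one isomorphic to the power set of a finite set. ${\tt I}_n$ is the digraph with vertices $v_0,\dots,v_n$ and edges $(v_{i-1},v_i)$, $i=1,\dots,n$. *)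

theory Defs
  imports Main
begin

definition digraph :: "'a set \<Rightarrow> ('a \<times> 'a) set \<Rightarrow> bool" where
  "digraph V E \<longleftrightarrow> finite V \<and> E \<subseteq> V \<times> V \<and> (\<forall>v. (v, v) \<notin> E)"

definition connected_digraph :: "'a set \<Rightarrow> ('a \<times> 'a) set \<Rightarrow> bool" where
  "connected_digraph V E \<longleftrightarrow> V \<noteq> {} \<and> (\<forall>u\<in>V. \<forall>v\<in>V. (u, v) \<in> (E \<union> E\<inverse>)\<^sup>*)"

definition component :: "'a set \<Rightarrow> ('a \<times> 'a) set \<Rightarrow> 'a \<Rightarrow> 'a set" where
  "component V F u = {v \<in> V. (u, v) \<in> (F \<union> F\<inverse>)\<^sup>*}"

text \<open>The subgraph of (V,F) on vertex set C is an isolated vertex (list of length 1)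
  or a simple directed path through the distinct vertices vs.\<close>
definition path_component :: "'a set \<Rightarrow> ('a \<times> 'a) set \<Rightarrow> bool" where
  "path_component C F \<longleftrightarrow>
     (\<exists>vs. vs \<noteq> [] \<and> distinct vs \<and> set vs = C \<and>
        {(a, b) \<in> F. a \<in> C \<and> b \<in> C} = set (zip vs (tl vs)))"

definition multipath :: "'a set \<Rightarrow> ('a \<times> 'a) set \<Rightarrow> ('a \<times> 'a) set \<Rightarrow> bool" where
  "multipath V E F \<longleftrightarrow> F \<subseteq> E \<and> (\<forall>u\<in>V. path_component (component V F u) F)"

text \<open>Path poset: multipaths (identified with their edge sets), ordered by inclusion.\<close>
definition path_poset :: "'a set \<Rightarrow> ('a \<times> 'a) set \<Rightarrow> ('a \<times> 'a) set set" where
  "path_poset V E = {F. multipath V E F}"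

definition has_maximum :: "'b set set \<Rightarrow> bool" where
  "has_maximum P \<longleftrightarrow> (\<exists>M\<in>P. \<forall>F\<in>P. F \<subseteq> M)"

definition poset_iso :: "'b set set \<Rightarrow> 'c set set \<Rightarrow> bool" where
  "poset_iso P Q \<longleftrightarrow> (\<exists>f. bij_betw f P Q \<and> (\<forall>x\<in>P. \<forall>y\<in>P. x \<subseteq> y \<longleftrightarrow> f x \<subseteq> f y))"

definition boolean_B :: "nat \<Rightarrow> nat set set" where
  "boolean_B n = Pow {..<n}"

definition boolean_poset :: "'b set set \<Rightarrow> bool" where
  "boolean_poset P \<longleftrightarrow> (\<exists>A :: nat set. finite A \<and> poset_iso P (Pow A))"

definition I_V :: "nat \<Rightarrow> nat set" where
  "I_V n = {0..n}"

definition I_E :: "nat \<Rightarrow> (nat \<times> nat) set" where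
  "I_E n = {(i - 1, i) | i. 1 \<le> i \<and> i \<le> n}"

definition digraph_iso :: "'a set \<Rightarrow> ('a \<times> 'a) set \<Rightarrow> 'b set \<Rightarrow> ('b \<times> 'b) set \<Rightarrow> bool" where
  "digraph_iso V E W D \<longleftrightarrow>
     (\<exists>f. bij_betw f V W \<and> (\<forall>u\<in>V. \<forall>v\<in>V. (u, v) \<in> E \<longleftrightarrow> (f u, f v) \<in> D))"

end

theory Submission
  imports Defs
begin

text \<open>
  A single edge is a multipath, so a maximum multipath contains every edge and therefore is
  E itself. As G is connected, the multipath E has a single component: E is a simple path
  through all vertices, i.e. G is isomorphic to I_n. Conversely, any set of edges of a simple
  path is a multipath, since its components are the maximal runs of consecutive chosen edges;
  hence the path poset of a path with n edges is the full power set of its edges, i.e. B(n).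
  Finally, a Boolean poset has a maximum, which closes the equivalence.
\<close>

definition path_edges :: "'a list \<Rightarrow> ('a \<times> 'a) set" where
  "path_edges vs = set (zip vs (tl vs))"

lemma path_edges_conv_nth: "path_edges vs = {(vs ! k, vs ! Suc k) | k. Suc k < length vs}"
  by (auto simp: path_edges_def set_zip nth_tl)

lemma path_edges_map: "path_edges (map g xs) = map_prod g g ` path_edges xs"
  by (simp add: path_edges_def flip: map_tl) (simp add: zip_map_map map_prod_def)

lemma path_edges_upt: "path_edges [l..<Suc r] = {(k, Suc k) | k. l \<le> k \<and> k < r}"
proof -
  have "path_edges [l..<Suc r] = {([l..<Suc r] ! k, [l..<Suc r] ! Suc k) | k. Suc k < Suc r - l}"
    by (simp add: path_edges_conv_nth del: upt_Suc)
  also have "\<dots> = {(l + k, Suc (l + k)) | k. Suc k < Suc r - l}"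
    by (intro Collect_cong ex_cong1) (auto simp del: upt_Suc)
  also have "\<dots> = {(k, Suc k) | k. l \<le> k \<and> k < r}"
  proof (intro set_eqI iffI)
    fix e assume "e \<in> {(k, Suc k) | k. l \<le> k \<and> k < r}"
    then obtain k where "e = (k, Suc k)" "l \<le> k" "k < r" by blast
    then show "e \<in> {(l + k, Suc (l + k)) | k. Suc k < Suc r - l}"
      by (intro CollectI exI[of _ "k - l"]) auto
  next
    fix e assume "e \<in> {(l + k, Suc (l + k)) | k. Suc k < Suc r - l}"
    then obtain k where "e = (l + k, Suc (l + k))" "Suc k < Suc r - l" by blast
    then show "e \<in> {(k, Suc k) | k. l \<le> k \<and> k < r}"
      by (intro CollectI exI[of _ "l + k"]) auto
  qed
  finally show ?thesis .
qed

lemma I_V_eq_set_upt: "I_V n = set [0..<Suc n]"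
  by (auto simp: I_V_def)

lemma I_E_eq_path_edges_upt: "I_E n = path_edges [0..<Suc n]"
  unfolding path_edges_upt I_E_def
proof (intro set_eqI iffI)
  fix e assume "e \<in> {(i - 1, i) | i. 1 \<le> i \<and> i \<le> n}"
  then obtain i where "e = (i - 1, i)" "1 \<le> i" "i \<le> n" by blast
  then show "e \<in> {(k, Suc k) | k. 0 \<le> k \<and> k < n}"
    by (intro CollectI exI[of _ "i - 1"]) auto
next
  fix e assume "e \<in> {(k, Suc k) | k. 0 \<le> k \<and> k < n}"
  then obtain k where "e = (k, Suc k)" "k < n" by blast
  then show "e \<in> {(i - 1, i) | i. 1 \<le> i \<and> i \<le> n}"
    by (intro CollectI exI[of _ "Suc k"]) auto
qed

lemma maximal_run:
  fixes P :: "nat \<Rightarrow> bool"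
  assumes "i \<le> m" "\<not> P m"
  obtains l r where "l \<le> i" "i \<le> r" "r \<le> m" "\<forall>k. l \<le> k \<and> k < r \<longrightarrow> P k" "\<not> P r"
    "0 < l \<Longrightarrow> \<not> P (l - 1)"
proof -
  define r where "r = (LEAST r. i \<le> r \<and> \<not> P r)"
  define l where "l = (GREATEST l. l \<le> i \<and> (0 < l \<longrightarrow> \<not> P (l - 1)))"
  have r: "i \<le> r" "\<not> P r" "r \<le> m"
    using LeastI[of "\<lambda>r. i \<le> r \<and> \<not> P r" m] Least_le[of "\<lambda>r. i \<le> r \<and> \<not> P r" m] assms
    unfolding r_def by auto
  have l: "l \<le> i" "0 < l \<longrightarrow> \<not> P (l - 1)"
    using GreatestI_nat[of "\<lambda>l. l \<le> i \<and> (0 < l \<longrightarrow> \<not> P (l - 1))" 0 i]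
    unfolding l_def by auto
  have "P k" if "l \<le> k" "k < r" for k
  proof (cases "k < i")
    case True
    show ?thesis
    proof (rule ccontr)
      assume "\<not> P k"
      then have "Suc k \<le> l"
        using True Greatest_le_nat[of "\<lambda>l. l \<le> i \<and> (0 < l \<longrightarrow> \<not> P (l - 1))" "Suc k" i]
        unfolding l_def by auto
      with \<open>l \<le> k\<close> show False by simp
    qed
  next
    case False
    then show ?thesis
      using \<open>k < r\<close> not_less_Least[of k "\<lambda>r. i \<le> r \<and> \<not> P r"] unfolding r_def by auto
  qed
  with l r show thesis using that by blast
qed

lemma path_edges_subset: "path_edges vs \<subseteq> set vs \<times> set vs"
  by (auto simp: path_edges_conv_nth)

lemma card_path_edges: "distinct vs \<Longrightarrow> card (path_edges vs) = length vs - 1"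
  by (simp add: path_edges_def distinct_card distinct_zipI1)

lemma nth_path_edge_iff:
  assumes "distinct vs" "k < length vs"
  shows "(vs ! k, b) \<in> path_edges vs \<longleftrightarrow> Suc k < length vs \<and> b = vs ! Suc k"
  using assms by (auto simp: path_edges_conv_nth nth_eq_iff_index_eq)

lemma component_eqI:
  assumes "u \<in> C" "C \<subseteq> V"
    and "\<And>x. x \<in> C \<Longrightarrow> (u, x) \<in> (F \<union> F\<inverse>)\<^sup>*"
    and "\<And>a b. (a, b) \<in> F \<Longrightarrow> a \<in> C \<longleftrightarrow> b \<in> C"
  shows "component V F u = C"
proof
  show "component V F u \<subseteq> C"
  proof
    fix x assume "x \<in> component V F u"
    then have "(u, x) \<in> (F \<union> F\<inverse>)\<^sup>*" by (simp add: component_def)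
    then show "x \<in> C" by induction (use assms(1,4) in auto)
  qed
  show "C \<subseteq> component V F u" using assms(2,3) by (auto simp: component_def)
qed

context
  fixes vs :: "'a list" and F :: "('a \<times> 'a) set" and l r :: nat
  assumes distinct: "distinct vs" and F_subset: "F \<subseteq> path_edges vs"
    and l_le_r: "l \<le> r" and r_less: "r < length vs"
    and run: "\<And>k. l \<le> k \<Longrightarrow> k < r \<Longrightarrow> (vs ! k, vs ! Suc k) \<in> F"
    and right_end: "(vs ! r, vs ! Suc r) \<notin> F"
    and left_end: "0 < l \<Longrightarrow> (vs ! (l - 1), vs ! l) \<notin> F"
begin

private lemma nth_mem_run_iff: "k < length vs \<Longrightarrow> vs ! k \<in> nth vs ` {l..r} \<longleftrightarrow> l \<le> k \<and> k \<le> r"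
  using r_less by (subst inj_on_image_mem_iff[OF inj_on_nth[OF distinct, of "{..<length vs}"]]) auto

private lemma run_edge_nth: "(a, b) \<in> F \<Longrightarrow> \<exists>k. Suc k < length vs \<and> a = vs ! k \<and> b = vs ! Suc k"
  using F_subset by (auto simp: path_edges_conv_nth)

private lemma run_closed:
  assumes "(a, b) \<in> F"
  shows "a \<in> nth vs ` {l..r} \<longleftrightarrow> b \<in> nth vs ` {l..r}"
proof -
  obtain k where k: "Suc k < length vs" "a = vs ! k" "b = vs ! Suc k"
    using run_edge_nth[OF assms] by auto
  have "k \<noteq> r" using right_end assms k by auto
  moreover have "Suc k \<noteq> l" using left_end assms k by auto
  ultimately show ?thesis using k by (auto simp: nth_mem_run_iff)
qed

private lemma run_reachable: "l \<le> j \<Longrightarrow> j \<le> r \<Longrightarrow> (vs ! l, vs ! j) \<in> (F \<union> F\<inverse>)\<^sup>*"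
proof (induction j)
  case (Suc j)
  show ?case
  proof (cases "l = Suc j")
    case False
    with Suc have "(vs ! l, vs ! j) \<in> (F \<union> F\<inverse>)\<^sup>*" "(vs ! j, vs ! Suc j) \<in> F"
      by (auto intro: run)
    then show ?thesis by (meson UnI1 rtrancl_into_rtrancl)
  qed simp
qed simp

lemma component_run:
  assumes "set vs \<subseteq> V" "l \<le> i" "i \<le> r"
  shows "component V F (vs ! i) = nth vs ` {l..r}"
proof (rule component_eqI)
  have sym: "sym ((F \<union> F\<inverse>)\<^sup>*)" by (simp add: sym_Un_converse sym_rtrancl)
  fix x assume "x \<in> nth vs ` {l..r}"
  then obtain j where "l \<le> j" "j \<le> r" "x = vs ! j" by auto
  then show "(vs ! i, x) \<in> (F \<union> F\<inverse>)\<^sup>*"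
    using run_reachable[of i] run_reachable[of j] assms(2,3) symD[OF sym] by (meson rtrancl_trans)
qed (use assms r_less run_closed in auto)

private lemma run_edges:
  "{(a, b) \<in> F. a \<in> nth vs ` {l..r} \<and> b \<in> nth vs ` {l..r}} = path_edges (map (nth vs) [l..<Suc r])"
proof -
  have "{(a, b) \<in> F. a \<in> nth vs ` {l..r} \<and> b \<in> nth vs ` {l..r}} =
    {(vs ! k, vs ! Suc k) | k. l \<le> k \<and> k < r}"
  proof (intro set_eqI iffI)
    fix e assume e: "e \<in> {(a, b) \<in> F. a \<in> nth vs ` {l..r} \<and> b \<in> nth vs ` {l..r}}"
    then obtain k where k: "Suc k < length vs" "e = (vs ! k, vs ! Suc k)"
      using run_edge_nth by blast
    then have "l \<le> k" "k \<le> r" "k \<noteq> r"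
      using e right_end by (auto simp: nth_mem_run_iff)
    with k show "e \<in> {(vs ! k, vs ! Suc k) | k. l \<le> k \<and> k < r}" by auto
  next
    fix e assume "e \<in> {(vs ! k, vs ! Suc k) | k. l \<le> k \<and> k < r}"
    then show "e \<in> {(a, b) \<in> F. a \<in> nth vs ` {l..r} \<and> b \<in> nth vs ` {l..r}}"
      using r_less by (auto intro: run)
  qed
  also have "\<dots> = path_edges (map (nth vs) [l..<Suc r])"
    unfolding path_edges_map path_edges_upt by auto
  finally show ?thesis .
qed

lemma path_component_run: "path_component (nth vs ` {l..r}) F"
  unfolding path_component_def
proof (intro exI[of _ "map (nth vs) [l..<Suc r]"] conjI)
  show "distinct (map (nth vs) [l..<Suc r])"
    using distinct r_less by (auto simp: distinct_map intro: inj_on_nth)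
  show "{(a, b) \<in> F. a \<in> nth vs ` {l..r} \<and> b \<in> nth vs ` {l..r}} =
    set (zip (map (nth vs) [l..<Suc r]) (tl (map (nth vs) [l..<Suc r])))"
    using run_edges by (simp add: path_edges_def del: upt_Suc)
  show "set (map (nth vs) [l..<Suc r]) = nth vs ` {l..r}"
    by (simp del: upt_Suc add: atLeastLessThanSuc_atLeastAtMost)
qed (use l_le_r in auto)

end

lemma multipath_if_subset_path_edges:
  assumes vs: "distinct vs" "set vs \<subseteq> V" and F: "F \<subseteq> E" "F \<subseteq> path_edges vs"
  shows "multipath V E F"
  unfolding multipath_def
proof (intro conjI ballI)
  fix u assume "u \<in> V"
  show "path_component (component V F u) F"
  proof (cases "u \<in> set vs")
    case False
    then have "(u, x) \<notin> F" "(x, u) \<notin> F" for x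
      using F(2) path_edges_subset by blast+
    then have "component V F u = {u}"
      using \<open>u \<in> V\<close> by (intro component_eqI) auto
    moreover have "{(a, b) \<in> F. a \<in> {u} \<and> b \<in> {u}} = set (zip [u] (tl [u]))"
      using \<open>(u, u) \<notin> F\<close> by auto
    ultimately show ?thesis
      unfolding path_component_def by (intro exI[of _ "[u]"]) auto
  next
    case True
    then obtain i where i: "i < length vs" "u = vs ! i" by (auto simp: in_set_conv_nth)
    let ?linked = "\<lambda>k. (vs ! k, vs ! Suc k) \<in> F"
    \<comment> \<open>\<open>vs ! length vs\<close> is unspecified, but distinctness still rules out this edge\<close>
    have "\<not> ?linked (length vs - 1)"
      using F(2) nth_path_edge_iff[OF vs(1)] i(1) by fastforce
    obtain l r where "l \<le> i" "i \<le> r" "r \<le> length vs - 1"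
      "\<forall>k. l \<le> k \<and> k < r \<longrightarrow> ?linked k" "\<not> ?linked r" "0 < l \<Longrightarrow> \<not> ?linked (l - 1)"
      by (rule maximal_run[of i "length vs - 1" ?linked]) (use i(1) \<open>\<not> ?linked (length vs - 1)\<close> in auto)
    with vs F(2) i show ?thesis
      using component_run[of vs F l r V i] path_component_run[of vs F l r] by auto
  qed
qed (use F in simp)

lemma multipath_singleton:
  assumes "digraph V E" "e \<in> E"
  shows "multipath V E {e}"
proof -
  obtain a b where "e = (a, b)" "a \<noteq> b" "a \<in> V" "b \<in> V"
    using assms unfolding digraph_def by (cases e) auto
  then show ?thesis
    using assms(2) by (intro multipath_if_subset_path_edges[of "[a, b]"]) (auto simp: path_edges_def)
qed

lemma path_poset_path_edges:
  assumes "distinct vs"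
  shows "path_poset (set vs) (path_edges vs) = Pow (path_edges vs)"
  using assms multipath_if_subset_path_edges[of vs]
  by (auto simp: path_poset_def multipath_def)

lemma has_maximum_path_poset_imp_path:
  assumes "digraph V E" "connected_digraph V E" "has_maximum (path_poset V E)"
  obtains vs where "distinct vs" "set vs = V" "E = path_edges vs"
proof -
  obtain M where M: "multipath V E M" "\<And>F. multipath V E F \<Longrightarrow> F \<subseteq> M"
    using assms(3) unfolding has_maximum_def path_poset_def by auto
  have "M = E"
    using M multipath_singleton[OF assms(1)] unfolding multipath_def by blast
  obtain u where "u \<in> V"
    using assms(2) unfolding connected_digraph_def by auto
  moreover have "component V E u = V"
    using assms(2) \<open>u \<in> V\<close> unfolding connected_digraph_def component_def by auto
  ultimately have "path_component V E"
    using M(1) \<open>M = E\<close> unfolding multipath_def by metis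
  then obtain vs where "distinct vs" "set vs = V" "{(a, b) \<in> E. a \<in> V \<and> b \<in> V} = path_edges vs"
    unfolding path_component_def path_edges_def by auto
  moreover have "{(a, b) \<in> E. a \<in> V \<and> b \<in> V} = E"
    using assms(1) unfolding digraph_def by auto
  ultimately show thesis using that by auto
qed

lemma poset_iso_Pow_boolean_B:
  assumes "finite A"
  shows "poset_iso (Pow A) (boolean_B (card A))"
proof -
  obtain h where h: "bij_betw h A {..<card A}"
    using finite_same_card_bij[OF assms, of "{..<card A}"] by auto
  then have "inj_on h A" by (rule bij_betw_imp_inj_on)
  have "h ` x \<subseteq> h ` y \<longleftrightarrow> x \<subseteq> y" if "x \<subseteq> A" "y \<subseteq> A" for x y
  proof -
    have "h ` x \<subseteq> h ` y \<longleftrightarrow> h ` (x \<union> y) = h ` y" by (simp add: image_Un subset_Un_eq)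
    also have "\<dots> \<longleftrightarrow> x \<union> y = y"
      using \<open>inj_on h A\<close> that by (intro inj_on_image_eq_iff) auto
    finally show ?thesis by blast
  qed
  then show ?thesis
    unfolding poset_iso_def boolean_B_def
    by (intro exI[of _ "image h"] conjI ballI bij_betw_Pow[OF h]) auto
qed

lemma digraph_iso_sym:
  assumes "digraph_iso V E W D"
  shows "digraph_iso W D V E"
proof -
  obtain f where f: "bij_betw f V W" and edges: "\<forall>u\<in>V. \<forall>v\<in>V. (u, v) \<in> E \<longleftrightarrow> (f u, f v) \<in> D"
    using assms unfolding digraph_iso_def by blast
  let ?g = "the_inv_into V f"
  have "bij_betw ?g W V" using f by (rule bij_betw_the_inv_into)
  moreover have "f (?g x) = x" "?g x \<in> V" if "x \<in> W" for x
    using f that \<open>bij_betw ?g W V\<close> by (auto intro: f_the_inv_into_f_bij_betw dest: bij_betwE)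
  ultimately show ?thesis
    unfolding digraph_iso_def using edges by (intro exI[of _ ?g]) metis
qed

lemma digraph_iso_image:
  assumes "inj_on g W" "D \<subseteq> W \<times> W"
  shows "digraph_iso W D (g ` W) (map_prod g g ` D)"
  unfolding digraph_iso_def
proof (intro exI[of _ g] conjI ballI)
  show "bij_betw g W (g ` W)" using assms(1) by (rule inj_on_imp_bij_betw)
  fix i j assume "i \<in> W" "j \<in> W"
  then show "(i, j) \<in> D \<longleftrightarrow> (g i, g j) \<in> map_prod g g ` D"
    using assms by (auto dest: inj_onD)
qed

lemma digraph_iso_imp_edges_eq_image:
  assumes "digraph_iso V E W D" "E \<subseteq> V \<times> V" "D \<subseteq> W \<times> W"
  obtains g where "bij_betw g W V" "E = map_prod g g ` D"
proof -
  obtain g where g: "bij_betw g W V" and edges: "\<forall>i\<in>W. \<forall>j\<in>W. (i, j) \<in> D \<longleftrightarrow> (g i, g j) \<in> E"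
    using digraph_iso_sym[OF assms(1)] unfolding digraph_iso_def by blast
  have "E = map_prod g g ` D"
  proof
    show "E \<subseteq> map_prod g g ` D"
    proof
      fix e assume "e \<in> E"
      then obtain i j where "e = (g i, g j)" "i \<in> W" "j \<in> W"
        using assms(2) g by (force simp: bij_betw_def)
      with edges \<open>e \<in> E\<close> show "e \<in> map_prod g g ` D" by force
    qed
    show "map_prod g g ` D \<subseteq> E" using assms(3) edges by auto
  qed
  with g show thesis using that by blast
qed

lemma digraph_iso_I_iff_path:
  assumes "E \<subseteq> V \<times> V"
  shows "digraph_iso V E (I_V n) (I_E n) \<longleftrightarrow>
    (\<exists>vs. distinct vs \<and> length vs = Suc n \<and> set vs = V \<and> E = path_edges vs)"
proof -
  have I_E_subset: "I_E n \<subseteq> I_V n \<times> I_V n"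
    unfolding I_E_eq_path_edges_upt I_V_eq_set_upt by (rule path_edges_subset)
  show ?thesis
  proof
    assume "digraph_iso V E (I_V n) (I_E n)"
    then obtain g where g: "bij_betw g (I_V n) V" "E = map_prod g g ` I_E n"
      using digraph_iso_imp_edges_eq_image assms I_E_subset by blast
    show "\<exists>vs. distinct vs \<and> length vs = Suc n \<and> set vs = V \<and> E = path_edges vs"
    proof (intro exI[of _ "map g [0..<Suc n]"] conjI)
      show "distinct (map g [0..<Suc n])" "set (map g [0..<Suc n]) = V"
        using g(1) unfolding bij_betw_def I_V_eq_set_upt by (auto simp: distinct_map simp del: upt_Suc)
      show "E = path_edges (map g [0..<Suc n])"
        unfolding g(2) path_edges_map I_E_eq_path_edges_upt ..
    qed simp
  next
    assume "\<exists>vs. distinct vs \<and> length vs = Suc n \<and> set vs = V \<and> E = path_edges vs"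
    then obtain vs where vs: "distinct vs" "length vs = Suc n" "set vs = V" "E = path_edges vs"
      by blast
    then have "vs = map (nth vs) [0..<Suc n]" by (metis map_nth)
    then have "nth vs ` I_V n = V" "map_prod (nth vs) (nth vs) ` I_E n = E"
      using vs by (metis I_V_eq_set_upt list.set_map, metis I_E_eq_path_edges_upt path_edges_map)
    moreover have "inj_on (nth vs) (I_V n)"
      using vs by (intro inj_on_nth) (auto simp: I_V_def)
    ultimately show "digraph_iso V E (I_V n) (I_E n)"
      using digraph_iso_image[OF _ I_E_subset] digraph_iso_sym by metis
  qed
qed

lemma has_maximum_Pow: "has_maximum (Pow A)"
  unfolding has_maximum_def by blast

lemma poset_iso_has_maximum:
  assumes "poset_iso P Q" "has_maximum Q"
  shows "has_maximum P"
proof -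
  obtain f where f: "bij_betw f P Q" and mono: "\<forall>x\<in>P. \<forall>y\<in>P. x \<subseteq> y \<longleftrightarrow> f x \<subseteq> f y"
    using assms(1) unfolding poset_iso_def by blast
  obtain N where "N \<in> Q" "\<forall>G\<in>Q. G \<subseteq> N"
    using assms(2) unfolding has_maximum_def by blast
  moreover obtain M where "M \<in> P" "f M = N"
    using f \<open>N \<in> Q\<close> by (metis bij_betw_iff_bijections)
  ultimately show ?thesis
    unfolding has_maximum_def using f mono by (metis bij_betwE)
qed

lemma path_digraph_isos:
  assumes "distinct vs" "set vs = V" "E = path_edges vs" "card E = n" "V \<noteq> {}"
  shows "poset_iso (path_poset V E) (boolean_B n) \<and> digraph_iso V E (I_V n) (I_E n)"
proof
  have "length vs = Suc n"
    using assms card_path_edges[OF assms(1)] by (cases vs) auto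
  then show "digraph_iso V E (I_V n) (I_E n)"
    using assms path_edges_subset digraph_iso_I_iff_path by metis
  have "path_poset V E = Pow E" "finite E"
    using path_poset_path_edges[OF assms(1)] assms(2,3) by (simp_all add: path_edges_def)
  then show "poset_iso (path_poset V E) (boolean_B n)"
    using poset_iso_Pow_boolean_B assms(4) by metis
qed

theorem proposition2p34:
  fixes V :: "'a set" and E :: "('a \<times> 'a) set" and n :: nat
  assumes "digraph V E" and "connected_digraph V E" and "card E = n"
  shows "(has_maximum (path_poset V E) \<longrightarrow>
            poset_iso (path_poset V E) (boolean_B n) \<and> digraph_iso V E (I_V n) (I_E n))
         \<and> (boolean_poset (path_poset V E) \<longleftrightarrow> (\<exists>m. digraph_iso V E (I_V m) (I_E m)))"
proof -
  have "V \<noteq> {}" using assms(2) unfolding connected_digraph_def by blast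
  have path_isos: "poset_iso (path_poset V E) (boolean_B n) \<and> digraph_iso V E (I_V n) (I_E n)"
    if "distinct vs" "set vs = V" "E = path_edges vs" for vs
    by (rule path_digraph_isos[OF that assms(3) \<open>V \<noteq> {}\<close>])
  have maximum: "poset_iso (path_poset V E) (boolean_B n) \<and> digraph_iso V E (I_V n) (I_E n)"
    if max: "has_maximum (path_poset V E)"
  proof -
    obtain vs where "distinct vs" "set vs = V" "E = path_edges vs"
      using has_maximum_path_poset_imp_path[OF assms(1,2) max] by blast
    then show ?thesis by (rule path_isos)
  qed
  have "\<exists>m. digraph_iso V E (I_V m) (I_E m)" if boolean: "boolean_poset (path_poset V E)"
  proof -
    obtain A :: "nat set" where "poset_iso (path_poset V E) (Pow A)"
      using boolean unfolding boolean_poset_def by blast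
    then have "has_maximum (path_poset V E)"
      using poset_iso_has_maximum has_maximum_Pow by blast
    then show ?thesis using maximum by blast
  qed
  moreover have "boolean_poset (path_poset V E)" if iso: "digraph_iso V E (I_V m) (I_E m)" for m
  proof -
    obtain vs where "distinct vs" "set vs = V" "E = path_edges vs"
      using iso digraph_iso_I_iff_path[of E V m] assms(1) unfolding digraph_def by blast
    then have "poset_iso (path_poset V E) (Pow {..<n})"
      using path_isos unfolding boolean_B_def by blast
    then show ?thesis
      unfolding boolean_poset_def by (intro exI[of _ "{..<n}"]) simp
  qed
  ultimately show ?thesis using maximum by blast
qed

end
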